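(* Let $0<\beta<\gamma\le1$, let $m\ge0$ be an integer and let $\theta=(k_r)$ be a lacunary sequence. Then $S_\theta^\beta(F,\Delta^m)\subset S_\theta^\gamma(F,\Delta^m)$, and the inclusion is strict.
   Context: A fuzzy number is a map $X:\mathbb{R}\to[0,1]$ which is normal, fuzzy convex, upper semicontinuous, with compact closure of $\{t:X(t)>0\}$; $L(\mathbb{R})$ is the set of fuzzy numbers. Level sets $[X]^\alpha=\{t:X(t)\ge\alpha\}$ ($\alpha\in(0,1]$), $[X]^0=\overline{\{t:X(t)>0\}}$, are compact intervals $[u^\alpha,v^\alpha]$. Subtraction: $[X-Y]^\alpha=[u_1^\alpha-v_2^\alpha,v_1^\alpha-u_2^\alpha]$ where $[X]^\alpha=[u_1^\alpha,v_1^\alpha]$, $[Y]^\alpha=[u_2^\alpha,v_2^\alpha]$. Metric: $d(X,Y)=\sup_{\alpha\in[0,1]}\max\{|u_1^\alpha-u_2^\alpha|,|v_1^\alpha-v_2^\alpha|\}$. For a sequence $X=(X_k)$ in $L(\mathbb{R})$: $(\Delta^0X)_k=X_k$, $(\Delta^1X)_k=X_k-X_{k+1}$, $(\Delta^mX)_k=(\Delta^1(\Delta^{m-1}X))_k$; write $\Delta^mX_k$. A lacunary sequence is an increasing integer sequence $\theta=(k_r)_{r\ge0}$ with $k_0=0$, $h_r=k_r-k_{r-1}\to\infty$; $I_r=(k_{r-1},k_r]$. For $\beta\in(0,1]$, $S_\theta^\beta(F,\Delta^m)$ is the set of sequences $X$ of fuzzy numbers for which there is $X_0\in L(\mathbb{R})$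 with $\lim_{r\to\infty}\frac{1}{h_r^\beta}|\{k\in I_r:d(\Delta^mX_k,X_0)\ge\varepsilon\}|=0$ for every $\varepsilon>0$. *)

theory Defs
  imports "HOL-Analysis.Analysis"
begin

definition upper_semicont :: "(real \<Rightarrow> real) \<Rightarrow> bool" where
  "upper_semicont X \<longleftrightarrow>
     (\<forall>x. \<forall>e>0. \<exists>d>0. \<forall>y. \<bar>y - x\<bar> < d \<longrightarrow> X y < X x + e)"

definition fuzzy_numbers :: "(real \<Rightarrow> real) set" where
  "fuzzy_numbers = {X.
     (\<forall>t. 0 \<le> X t \<and> X t \<le> 1) \<and>
     (\<exists>t. X t = 1) \<and>
     (\<forall>x y l. 0 \<le> l \<and> l \<le> 1 \<longrightarrow> min (X x) (X y) \<le> X (l * x + (1 - l) * y)) \<and>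
     upper_semicont X \<and>
     compact (closure {t. X t > 0})}"

definition level :: "(real \<Rightarrow> real) \<Rightarrow> real \<Rightarrow> real set" where
  "level X a = (if a = 0 then closure {t. X t > 0} else {t. X t \<ge> a})"

definition lower_end :: "(real \<Rightarrow> real) \<Rightarrow> real \<Rightarrow> real" where
  "lower_end X a = Inf (level X a)"

definition upper_end :: "(real \<Rightarrow> real) \<Rightarrow> real \<Rightarrow> real" where
  "upper_end X a = Sup (level X a)"

text \<open>Subtraction defined through its level sets
  [X - Y]^a = [u1^a - v2^a, v1^a - u2^a]; the membership function is
  reconstructed from the level sets in the standard way.\<close>
definition fuzzy_sub :: "(real \<Rightarrow> real) \<Rightarrow> (real \<Rightarrow> real) \<Rightarrow> (real \<Rightarrow> real)" where
  "fuzzy_sub X Y = (\<lambda>t. Sup ({0} \<union> {a. 0 < a \<and> a \<le> 1 \<and>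
       lower_end X a - upper_end Y a \<le> t \<and> t \<le> upper_end X a - lower_end Y a}))"

definition fuzzy_dist :: "(real \<Rightarrow> real) \<Rightarrow> (real \<Rightarrow> real) \<Rightarrow> real" where
  "fuzzy_dist X Y = (SUP a\<in>{0..1}.
       max \<bar>lower_end X a - lower_end Y a\<bar> \<bar>upper_end X a - upper_end Y a\<bar>)"

fun fuzzy_delta :: "nat \<Rightarrow> (nat \<Rightarrow> real \<Rightarrow> real) \<Rightarrow> nat \<Rightarrow> (real \<Rightarrow> real)" where
  "fuzzy_delta 0 X k = X k"
| "fuzzy_delta (Suc m) X k = fuzzy_sub (fuzzy_delta m X k) (fuzzy_delta m X (Suc k))"

definition lacunary :: "(nat \<Rightarrow> nat) \<Rightarrow> bool" where
  "lacunary \<theta> \<longleftrightarrow> strict_mono \<theta> \<and> \<theta> 0 = 0 \<and>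
     filterlim (\<lambda>r. real (\<theta> (Suc r) - \<theta> r)) at_top sequentially"

text \<open>S_theta^beta(F, Delta^m). Index r+1 of the paper corresponds to Suc r here:
  I_{r+1} = {theta r <.. theta (Suc r)}, h_{r+1} = theta (Suc r) - theta r.\<close>
definition lac_stat :: "(nat \<Rightarrow> nat) \<Rightarrow> real \<Rightarrow> nat \<Rightarrow> (nat \<Rightarrow> real \<Rightarrow> real) set" where
  "lac_stat \<theta> \<beta> m = {X. (\<forall>k. X k \<in> fuzzy_numbers) \<and>
     (\<exists>X0\<in>fuzzy_numbers. \<forall>\<epsilon>>0.
        (\<lambda>r. real (card {k\<in>{\<theta> r<..\<theta> (Suc r)}. fuzzy_dist (fuzzy_delta m X k) X0 \<ge> \<epsilon>})
               / (real (\<theta> (Suc r) - \<theta> r)) powr \<beta>) \<longlonglongrightarrow> 0)}"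

end

theory Submission
  imports Defs
begin

text \<open>Inclusion: lacunary blocks have length \<open>h\<^sub>r \<ge> 1\<close>, so \<open>h\<^sub>r\<^sup>\<beta> \<le> h\<^sub>r\<^sup>\<gamma>\<close>.
  Strictness: on crisp sequences \<open>\<Delta>\<^sup>m\<close> is the \<open>m\<close>-th difference operator, which is onto,
  so there is \<open>X\<close> with \<open>\<Delta>\<^sup>m X\<^sub>k\<close> the crisp number 1 on the first \<open>\<lceil>h\<^sub>r\<^sup>\<beta>\<rceil>\<close> indices of each
  block \<open>I\<^sub>r\<close> and 0 on the rest. Measured against the crisp 0 only \<open>\<lceil>h\<^sub>r\<^sup>\<beta>\<rceil> = o(h\<^sub>r\<^sup>\<gamma>)\<close>
  indices of \<open>I\<^sub>r\<close> are far, so \<open>X \<in> S\<^sub>\<theta>\<^sup>\<gamma>\<close>. But every fuzzy number is at distance at least 1/2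
  from crisp 0 or from crisp 1, so against any candidate limit at least
  \<open>min \<lceil>h\<^sub>r\<^sup>\<beta>\<rceil> (h\<^sub>r - \<lceil>h\<^sub>r\<^sup>\<beta>\<rceil>) \<ge> h\<^sub>r\<^sup>\<beta>\<close> indices are far (eventually, as \<open>\<beta> < 1\<close>),
  so \<open>X \<notin> S\<^sub>\<theta>\<^sup>\<beta>\<close>.\<close>

abbreviation lac_block :: "(nat \<Rightarrow> nat) \<Rightarrow> nat \<Rightarrow> nat set" where
  "lac_block \<theta> r \<equiv> {\<theta> r<..\<theta> (Suc r)}"

abbreviation lac_len :: "(nat \<Rightarrow> nat) \<Rightarrow> nat \<Rightarrow> real" where
  "lac_len \<theta> r \<equiv> real (\<theta> (Suc r) - \<theta> r)"

lemma lacunary_lac_len_ge_1: "lacunary \<theta> \<Longrightarrow> 1 \<le> lac_len \<theta> r"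
  unfolding lacunary_def strict_mono_def by (simp add: Suc_leI)

lemma lacunary_lac_len_at_top: "lacunary \<theta> \<Longrightarrow> filterlim (lac_len \<theta>) at_top sequentially"
  by (simp add: lacunary_def)

lemma tendsto_zero_div_powr_mono:
  fixes c h :: "nat \<Rightarrow> real"
  assumes "(\<lambda>r. c r / h r powr \<beta>) \<longlonglongrightarrow> 0" "\<And>r. 0 \<le> c r" "\<And>r. 1 \<le> h r" "\<beta> \<le> \<gamma>"
  shows "(\<lambda>r. c r / h r powr \<gamma>) \<longlonglongrightarrow> 0"
proof (rule tendsto_sandwich[OF _ _ tendsto_const assms(1)])
  have "c r / h r powr \<gamma> \<le> c r / h r powr \<beta>" for r
    using assms(2,3)[of r] assms(4) by (intro divide_left_mono powr_mono) auto
  then show "eventually (\<lambda>r. c r / h r powr \<gamma> \<le> c r / h r powr \<beta>) sequentially"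
    by simp
qed (simp add: assms(2))

lemma not_tendsto_zero_div_powr:
  fixes c h :: "nat \<Rightarrow> real"
  assumes "eventually (\<lambda>r. h r powr \<beta> \<le> c r) sequentially" "\<And>r. 0 < h r"
  shows "\<not> (\<lambda>r. c r / h r powr \<beta>) \<longlonglongrightarrow> 0"
proof
  assume "(\<lambda>r. c r / h r powr \<beta>) \<longlonglongrightarrow> 0"
  then have "eventually (\<lambda>r. c r / h r powr \<beta> < 1) sequentially"
    by (rule order_tendstoD) simp
  with assms(1) have "eventually (\<lambda>_. False) sequentially"
  proof eventually_elim
    case (elim r)
    have "0 < h r powr \<beta>"
      using assms(2)[of r] by simp
    with elim show False
      by (simp add: pos_divide_less_eq)
  qed
  then show False by simp
qed

lemma eventually_powr_le_diff:
  fixes h :: "nat \<Rightarrow> real"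
  assumes "filterlim h at_top sequentially" "\<beta> < 1"
  shows "eventually (\<lambda>r. h r powr \<beta> \<le> h r - h r powr \<beta> - 1) sequentially"
proof -
  have "(\<lambda>r. h r powr (\<beta> - 1)) \<longlonglongrightarrow> 0"
    using tendsto_neg_powr[OF _ assms(1)] assms(2) by simp
  then have "eventually (\<lambda>r. h r powr (\<beta> - 1) < 1/4) sequentially"
    by (rule order_tendstoD) simp
  moreover have "eventually (\<lambda>r. 2 \<le> h r) sequentially"
    using assms(1) by (simp add: filterlim_at_top)
  ultimately show ?thesis
  proof eventually_elim
    case (elim r)
    have "h r powr \<beta> = h r powr (\<beta> - 1) * h r"
      using elim(2) by (simp add: powr_diff)
    also have "\<dots> \<le> h r / 4"
      using elim by (simp add: mult_right_mono)
    finally show ?case using elim(2) by linarith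
  qed
qed

lemma lac_stat_mono:
  assumes "\<beta> \<le> \<gamma>" "lacunary \<theta>"
  shows "lac_stat \<theta> \<beta> m \<subseteq> lac_stat \<theta> \<gamma> m"
proof
  fix X
  assume "X \<in> lac_stat \<theta> \<beta> m"
  then obtain X0 where "\<forall>k. X k \<in> fuzzy_numbers" "X0 \<in> fuzzy_numbers" and lim: "\<forall>\<epsilon>>0.
      (\<lambda>r. real (card {k\<in>lac_block \<theta> r. \<epsilon> \<le> fuzzy_dist (fuzzy_delta m X k) X0})
        / lac_len \<theta> r powr \<beta>) \<longlonglongrightarrow> 0"
    unfolding lac_stat_def by blast
  moreover have "\<forall>\<epsilon>>0.
      (\<lambda>r. real (card {k\<in>lac_block \<theta> r. \<epsilon> \<le> fuzzy_dist (fuzzy_delta m X k) X0})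
        / lac_len \<theta> r powr \<gamma>) \<longlonglongrightarrow> 0"
  proof (intro allI impI)
    fix \<epsilon> :: real
    assume "\<epsilon> > 0"
    show "(\<lambda>r. real (card {k\<in>lac_block \<theta> r. \<epsilon> \<le> fuzzy_dist (fuzzy_delta m X k) X0})
        / lac_len \<theta> r powr \<gamma>) \<longlonglongrightarrow> 0"
      by (rule tendsto_zero_div_powr_mono[where \<beta> = \<beta>])
        (use lim \<open>\<epsilon> > 0\<close> lacunary_lac_len_ge_1[OF assms(2)] assms(1) in simp_all)
  qed
  ultimately show "X \<in> lac_stat \<theta> \<gamma> m"
    unfolding lac_stat_def by blast
qed

subsection \<open>Crisp fuzzy numbers\<close>

definition crisp :: "real \<Rightarrow> real \<Rightarrow> real" where
  "crisp c = (\<lambda>t. if t = c then 1 else 0)"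

lemma crisp_support: "{t. crisp c t > 0} = {c}"
  by (auto simp: crisp_def)

lemma level_crisp: "0 \<le> a \<Longrightarrow> a \<le> 1 \<Longrightarrow> level (crisp c) a = {c}"
  unfolding level_def using crisp_support[of c] by (auto simp: crisp_def)

lemma lower_end_crisp: "0 \<le> a \<Longrightarrow> a \<le> 1 \<Longrightarrow> lower_end (crisp c) a = c"
  by (simp add: lower_end_def level_crisp)

lemma upper_end_crisp: "0 \<le> a \<Longrightarrow> a \<le> 1 \<Longrightarrow> upper_end (crisp c) a = c"
  by (simp add: upper_end_def level_crisp)

lemma upper_semicont_crisp: "upper_semicont (crisp c)"
  unfolding upper_semicont_def
proof (intro allI impI)
  fix x e :: real
  assume "e > 0"
  show "\<exists>d>0. \<forall>y. \<bar>y - x\<bar> < d \<longrightarrow> crisp c y < crisp c x + e"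
  proof (cases "x = c")
    case True
    with \<open>e > 0\<close> show ?thesis by (intro exI[of _ 1]) (auto simp: crisp_def)
  next
    case False
    with \<open>e > 0\<close> show ?thesis by (intro exI[of _ "\<bar>x - c\<bar>"]) (auto simp: crisp_def)
  qed
qed

lemma crisp_in_fuzzy_numbers: "crisp c \<in> fuzzy_numbers"
proof -
  have "min (crisp c x) (crisp c y) \<le> crisp c (l * x + (1 - l) * y)" for x y l
  proof (cases "x = c \<and> y = c")
    case True
    then have "l * x + (1 - l) * y = c" by (simp add: algebra_simps)
    then show ?thesis by (simp add: crisp_def)
  qed (auto simp: crisp_def)
  then show ?thesis
    unfolding fuzzy_numbers_def using upper_semicont_crisp crisp_support[of c]
    by (auto simp: crisp_def intro: exI[of _ c])
qed

lemma fuzzy_sub_crisp: "fuzzy_sub (crisp a) (crisp b) = crisp (a - b)"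
proof
  fix t
  have levels: "{x. 0 < x \<and> x \<le> 1 \<and> lower_end (crisp a) x - upper_end (crisp b) x \<le> t \<and>
      t \<le> upper_end (crisp a) x - lower_end (crisp b) x} = {x. 0 < x \<and> x \<le> 1 \<and> t = a - b}"
    by (fastforce simp: lower_end_crisp upper_end_crisp)
  have "{0} \<union> {x. 0 < x \<and> x \<le> 1} = {0..1::real}"
    by auto
  then show "fuzzy_sub (crisp a) (crisp b) t = crisp (a - b) t"
    unfolding fuzzy_sub_def levels by (cases "t = a - b") (simp_all add: crisp_def)
qed

lemma fuzzy_dist_crisp: "fuzzy_dist (crisp a) (crisp b) = \<bar>a - b\<bar>"
proof -
  have "fuzzy_dist (crisp a) (crisp b) = (SUP x\<in>{0..1::real}. \<bar>a - b\<bar>)"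
    unfolding fuzzy_dist_def by (intro SUP_cong) (auto simp: lower_end_crisp upper_end_crisp)
  then show ?thesis by simp
qed

subsection \<open>Lower bound for the distance of fuzzy numbers\<close>

lemma fuzzy_number_ends_bounded:
  assumes "X \<in> fuzzy_numbers"
  obtains B where "\<And>a. 0 \<le> a \<Longrightarrow> a \<le> 1 \<Longrightarrow> \<bar>lower_end X a\<bar> \<le> B \<and> \<bar>upper_end X a\<bar> \<le> B"
proof -
  let ?K = "closure {t. X t > 0}"
  have "compact ?K" using assms by (simp add: fuzzy_numbers_def)
  then obtain B where B: "\<And>t. t \<in> ?K \<Longrightarrow> \<bar>t\<bar> \<le> B"
    using compact_imp_bounded bounded_iff by (metis real_norm_def)
  obtain t1 where "X t1 = 1" using assms by (auto simp: fuzzy_numbers_def)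
  have "\<bar>lower_end X a\<bar> \<le> B \<and> \<bar>upper_end X a\<bar> \<le> B" if "0 \<le> a" "a \<le> 1" for a
  proof -
    have "level X a \<subseteq> ?K"
      using that unfolding level_def by (auto intro!: closure_subset[THEN subsetD] simp: less_le_trans)
    then have bounds: "\<And>t. t \<in> level X a \<Longrightarrow> -B \<le> t \<and> t \<le> B"
      using B by fastforce
    have t1: "t1 \<in> level X a"
      using that \<open>X t1 = 1\<close> unfolding level_def by (auto intro!: closure_subset[THEN subsetD])
    have "bdd_below (level X a)" "bdd_above (level X a)"
      using bounds by (auto intro: bdd_belowI[of _ "-B"] bdd_aboveI[of _ B])
    with t1 have "Inf (level X a) \<le> t1" "t1 \<le> Sup (level X a)"
      by (auto intro: cInf_lower cSup_upper)
    moreover have "-B \<le> Inf (level X a)" "Sup (level X a) \<le> B"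
      using bounds t1 by (auto intro!: cInf_greatest cSup_least)
    moreover have "-B \<le> t1" "t1 \<le> B"
      using bounds[OF t1] by auto
    ultimately show ?thesis
      unfolding lower_end_def upper_end_def by linarith
  qed
  then show ?thesis using that by blast
qed

lemma lower_end_diff_le_fuzzy_dist:
  assumes "X \<in> fuzzy_numbers" "Y \<in> fuzzy_numbers" "0 \<le> a" "a \<le> 1"
  shows "\<bar>lower_end X a - lower_end Y a\<bar> \<le> fuzzy_dist X Y"
proof -
  obtain B where B: "\<And>a. 0 \<le> a \<Longrightarrow> a \<le> 1 \<Longrightarrow> \<bar>lower_end X a\<bar> \<le> B \<and> \<bar>upper_end X a\<bar> \<le> B"
    using fuzzy_number_ends_bounded[OF assms(1)] by blast
  obtain C where C: "\<And>a. 0 \<le> a \<Longrightarrow> a \<le> 1 \<Longrightarrow> \<bar>lower_end Y a\<bar> \<le> C \<and> \<bar>upper_end Y a\<bar> \<le> C"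
    using fuzzy_number_ends_bounded[OF assms(2)] by blast
  let ?f = "\<lambda>a. max \<bar>lower_end X a - lower_end Y a\<bar> \<bar>upper_end X a - upper_end Y a\<bar>"
  have "?f a \<le> B + C" if "0 \<le> a" "a \<le> 1" for a
    using B[OF that] C[OF that] by linarith
  then have "bdd_above (?f ` {0..1})"
    by (intro bdd_aboveI[of _ "B + C"]) auto
  then have "?f a \<le> fuzzy_dist X Y"
    unfolding fuzzy_dist_def using assms(3,4) by (intro cSUP_upper) auto
  then show ?thesis by simp
qed

lemma fuzzy_dist_crisp_ge:
  "X \<in> fuzzy_numbers \<Longrightarrow> \<bar>c - lower_end X 1\<bar> \<le> fuzzy_dist (crisp c) X"
  using lower_end_diff_le_fuzzy_dist[OF crisp_in_fuzzy_numbers, of X 1 c]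
  by (simp add: lower_end_crisp)

subsection \<open>Crisp sequences with prescribed differences\<close>

lemma fuzzy_delta_Suc_right: "fuzzy_delta (Suc m) X k = fuzzy_delta m (\<lambda>j. fuzzy_sub (X j) (X (Suc j))) k"
  by (induction m arbitrary: k) simp_all

fun antidiff :: "(nat \<Rightarrow> real) \<Rightarrow> nat \<Rightarrow> real" where
  "antidiff y 0 = 0"
| "antidiff y (Suc k) = antidiff y k - y k"

lemma fuzzy_delta_crisp_antidiff:
  "fuzzy_delta m (\<lambda>k. crisp ((antidiff ^^ m) y k)) k = crisp (y k)"
proof (induction m arbitrary: k)
  case (Suc m)
  let ?z = "(antidiff ^^ m) y"
  have "(\<lambda>j. fuzzy_sub (crisp (antidiff ?z j)) (crisp (antidiff ?z (Suc j)))) = (\<lambda>j. crisp (?z j))"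
    by (simp add: fuzzy_sub_crisp)
  then show ?case
    using Suc by (simp only: funpow.simps comp_apply fuzzy_delta_Suc_right)
qed simp

subsection \<open>A sequence separating \<open>\<beta>\<close> from \<open>\<gamma>\<close>\<close>

definition block_prefix :: "(nat \<Rightarrow> nat) \<Rightarrow> (nat \<Rightarrow> nat) \<Rightarrow> nat set" where
  "block_prefix \<theta> n = (\<Union>r. {\<theta> r<..\<theta> r + n r})"

lemma block_prefix_Int_block:
  assumes "strict_mono \<theta>" "\<And>r. n r \<le> \<theta> (Suc r) - \<theta> r"
  shows "block_prefix \<theta> n \<inter> {\<theta> r<..\<theta> (Suc r)} = {\<theta> r<..\<theta> r + n r}"
proof -
  have unique: "r' = r" if "\<theta> r < k" "k \<le> \<theta> (Suc r)" "\<theta> r' < k" "k \<le> \<theta> r' + n r'" for r' k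
  proof (rule ccontr)
    assume "r' \<noteq> r"
    then consider "Suc r' \<le> r" | "Suc r \<le> r'" by linarith
    then show False
    proof cases
      case 1
      then have "\<theta> (Suc r') \<le> \<theta> r" "\<theta> r' < \<theta> (Suc r')"
        using assms(1) by (auto simp: strict_mono_leD strict_mono_def)
      then show False using that assms(2)[of r'] by linarith
    next
      case 2
      then have "\<theta> (Suc r) \<le> \<theta> r'" using assms(1) strict_mono_leD by blast
      then show False using that by linarith
    qed
  qed
  have "\<theta> r + n r \<le> \<theta> (Suc r)"
    using assms(2)[of r] strict_mono_less[OF assms(1), of r "Suc r"] by linarith
  show ?thesis
  proof (intro equalityI subsetI)
    fix k
    assume "k \<in> block_prefix \<theta> n \<inter> {\<theta> r<..\<theta> (Suc r)}"
    then obtain r' where "\<theta> r' < k" "k \<le> \<theta> r' + n r'" "\<theta> r < k" "k \<le> \<theta> (Suc r)"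
      unfolding block_prefix_def by auto
    with unique[of k r'] show "k \<in> {\<theta> r<..\<theta> r + n r}"
      by auto
  qed (use \<open>\<theta> r + n r \<le> \<theta> (Suc r)\<close> in \<open>auto simp: block_prefix_def\<close>)
qed

lemma crisp_antidiff_in_lac_stat:
  assumes "lacunary \<theta>" "0 < \<gamma>" "\<beta> < \<gamma>"
    and count: "\<And>r. card (S \<inter> lac_block \<theta> r) \<le> lac_len \<theta> r powr \<beta> + 1"
  shows "(\<lambda>k. crisp ((antidiff ^^ m) (indicator S) k)) \<in> lac_stat \<theta> \<gamma> m"
  unfolding lac_stat_def
proof (intro CollectI conjI allI impI bexI[of _ "crisp 0"] crisp_in_fuzzy_numbers)
  fix \<epsilon> :: real
  assume "\<epsilon> > 0"
  let ?h = "lac_len \<theta>"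
  define c where "c r = real (card {k\<in>lac_block \<theta> r. \<epsilon> \<le> fuzzy_dist
    (fuzzy_delta m (\<lambda>k. crisp ((antidiff ^^ m) (indicator S) k)) k) (crisp 0)})" for r
  have bound: "c r / ?h r powr \<gamma> \<le> ?h r powr (\<beta> - \<gamma>) + ?h r powr (- \<gamma>)" for r
  proof -
    have "{k\<in>lac_block \<theta> r. \<epsilon> \<le> \<bar>indicator S k\<bar>} \<subseteq> S \<inter> lac_block \<theta> r"
      using \<open>\<epsilon> > 0\<close> by (auto simp: indicator_def)
    then have "c r \<le> ?h r powr \<beta> + 1"
      unfolding c_def fuzzy_delta_crisp_antidiff fuzzy_dist_crisp
      using card_mono[OF _ \<open>_ \<subseteq> S \<inter> lac_block \<theta> r\<close>] count[of r] by simp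
    then have "c r / ?h r powr \<gamma> \<le> (?h r powr \<beta> + 1) / ?h r powr \<gamma>"
      by (simp add: divide_right_mono)
    also have "\<dots> = ?h r powr (\<beta> - \<gamma>) + ?h r powr (- \<gamma>)"
      using lacunary_lac_len_ge_1[OF assms(1), of r]
      by (simp add: add_divide_distrib powr_diff powr_minus divide_inverse distrib_right)
    finally show ?thesis .
  qed
  have bound_lim: "(\<lambda>r. ?h r powr (\<beta> - \<gamma>) + ?h r powr (- \<gamma>)) \<longlonglongrightarrow> 0"
    using tendsto_add[OF tendsto_neg_powr tendsto_neg_powr, OF _ _ _ lacunary_lac_len_at_top[OF assms(1)]]
      lacunary_lac_len_at_top[OF assms(1)] assms(2,3) by simp
  show "(\<lambda>r. c r / ?h r powr \<gamma>) \<longlonglongrightarrow> 0"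
    by (rule tendsto_sandwich[OF _ _ tendsto_const bound_lim]) (simp add: c_def, simp add: bound)
qed

lemma card_indicator_far_ge:
  fixes L x :: real
  assumes "finite I" "x \<le> card (S \<inter> I)" "x \<le> card (I - S)"
  shows "x \<le> card {k\<in>I. 1/2 \<le> \<bar>indicator S k - L\<bar>}"
proof -
  let ?F = "{k\<in>I. 1/2 \<le> \<bar>indicator S k - L\<bar>}"
  have "finite ?F"
    using assms(1) by simp
  have "S \<inter> I \<subseteq> ?F \<or> I - S \<subseteq> ?F"
    by (cases "1/2 \<le> \<bar>1 - L\<bar>") auto
  then show ?thesis
  proof (elim disjE)
    assume "S \<inter> I \<subseteq> ?F"
    with \<open>finite ?F\<close> have "card (S \<inter> I) \<le> card ?F"
      by (rule card_mono)
    with assms(2) show ?thesis by linarith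
  next
    assume "I - S \<subseteq> ?F"
    with \<open>finite ?F\<close> have "card (I - S) \<le> card ?F"
      by (rule card_mono)
    with assms(3) show ?thesis by linarith
  qed
qed

lemma crisp_antidiff_notin_lac_stat:
  assumes "lacunary \<theta>" "\<beta> < 1"
    and ones: "\<And>r. lac_len \<theta> r powr \<beta> \<le> card (S \<inter> lac_block \<theta> r)"
    and zeros: "\<And>r. lac_len \<theta> r - lac_len \<theta> r powr \<beta> - 1 \<le> card (lac_block \<theta> r - S)"
  shows "(\<lambda>k. crisp ((antidiff ^^ m) (indicator S) k)) \<notin> lac_stat \<theta> \<beta> m"
proof
  let ?h = "lac_len \<theta>"
  let ?X = "\<lambda>k. crisp ((antidiff ^^ m) (indicator S) k)"
  assume "?X \<in> lac_stat \<theta> \<beta> m"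
  then obtain X0 where "X0 \<in> fuzzy_numbers" and lim: "\<forall>\<epsilon>>0. (\<lambda>r. real (card {k\<in>lac_block \<theta> r.
      \<epsilon> \<le> fuzzy_dist (fuzzy_delta m ?X k) X0}) / ?h r powr \<beta>) \<longlonglongrightarrow> 0"
    unfolding lac_stat_def by blast
  define far where "far r = {k\<in>lac_block \<theta> r. 1/2 \<le> \<bar>indicator S k - lower_end X0 1\<bar>}" for r
  have "eventually (\<lambda>r. ?h r powr \<beta> \<le> ?h r - ?h r powr \<beta> - 1) sequentially"
    using eventually_powr_le_diff[OF lacunary_lac_len_at_top[OF assms(1)] \<open>\<beta> < 1\<close>] .
  then have "eventually (\<lambda>r. ?h r powr \<beta> \<le> card (far r)) sequentially"
  proof (rule eventually_mono)
    fix r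
    assume "?h r powr \<beta> \<le> ?h r - ?h r powr \<beta> - 1"
    with ones[of r] zeros[of r] show "?h r powr \<beta> \<le> card (far r)"
      unfolding far_def by (intro card_indicator_far_ge) auto
  qed
  have far_le: "card (far r) \<le> card {k\<in>lac_block \<theta> r. 1/2 \<le> fuzzy_dist (fuzzy_delta m ?X k) X0}" for r
  proof (rule card_mono)
    show "far r \<subseteq> {k\<in>lac_block \<theta> r. 1/2 \<le> fuzzy_dist (fuzzy_delta m ?X k) X0}"
      unfolding far_def fuzzy_delta_crisp_antidiff
      using order_trans[OF _ fuzzy_dist_crisp_ge[OF \<open>X0 \<in> fuzzy_numbers\<close>]] by blast
  qed simp
  from \<open>eventually (\<lambda>r. ?h r powr \<beta> \<le> card (far r)) sequentially\<close>
  have "eventually (\<lambda>r. ?h r powr \<beta> \<le>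
      card {k\<in>lac_block \<theta> r. 1/2 \<le> fuzzy_dist (fuzzy_delta m ?X k) X0}) sequentially"
    by (rule eventually_mono) (erule order_trans, rule of_nat_mono[OF far_le])
  moreover have "0 < ?h r" for r
    using lacunary_lac_len_ge_1[OF assms(1), of r] by linarith
  ultimately have "\<not> (\<lambda>r. real (card {k\<in>lac_block \<theta> r. 1/2 \<le> fuzzy_dist (fuzzy_delta m ?X k) X0})
      / ?h r powr \<beta>) \<longlonglongrightarrow> 0"
    by (rule not_tendsto_zero_div_powr)
  with lim[rule_format, of "1/2"] show False
    by simp
qed

lemma lac_stat_strict:
  assumes "lacunary \<theta>" "0 < \<gamma>" "\<beta> < \<gamma>" "\<beta> < 1"
  obtains X where "X \<in> lac_stat \<theta> \<gamma> m" "X \<notin> lac_stat \<theta> \<beta> m"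
proof -
  let ?h = "lac_len \<theta>"
  define n where "n r = nat \<lceil>?h r powr \<beta>\<rceil>" for r
  define S where "S = block_prefix \<theta> n"
  have h1: "1 \<le> ?h r" for r
    using lacunary_lac_len_ge_1[OF assms(1)] .
  have n_le: "n r \<le> \<theta> (Suc r) - \<theta> r" for r
  proof -
    have "?h r powr \<beta> \<le> ?h r powr 1"
      using h1[of r] assms(4) by (intro powr_mono) auto
    then show ?thesis
      using h1[of r] unfolding n_def by (simp add: nat_le_iff ceiling_le_iff)
  qed
  have S_block: "S \<inter> lac_block \<theta> r = {\<theta> r<..\<theta> r + n r}" for r
    unfolding S_def using assms(1) n_le by (intro block_prefix_Int_block) (auto simp: lacunary_def)
  have "lac_block \<theta> r - S = {\<theta> r + n r<..\<theta> (Suc r)}" for r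
  proof -
    have "lac_block \<theta> r - S = lac_block \<theta> r - (S \<inter> lac_block \<theta> r)"
      by blast
    also have "\<dots> = {\<theta> r + n r<..\<theta> (Suc r)}"
      unfolding S_block by auto
    finally show ?thesis .
  qed
  then have card_diff: "card (lac_block \<theta> r - S) = ?h r - n r" for r
    using n_le[of r] by simp
  have n_bounds: "?h r powr \<beta> \<le> n r" "n r \<le> ?h r powr \<beta> + 1" for r
    unfolding n_def using powr_ge_zero[of "?h r" \<beta>] by simp_all
  have card_zeros: "?h r - ?h r powr \<beta> - 1 \<le> card (lac_block \<theta> r - S)" for r
    using card_diff[of r] n_bounds(2)[of r] by linarith
  have card_ones: "card (S \<inter> lac_block \<theta> r) = n r" for r
    unfolding S_block by simp
  show ?thesis
  proof (rule that)
    show "(\<lambda>k. crisp ((antidiff ^^ m) (indicator S) k)) \<in> lac_stat \<theta> \<gamma> m"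
      using crisp_antidiff_in_lac_stat[OF assms(1-3), of S] n_bounds(2) by (simp add: card_ones)
    show "(\<lambda>k. crisp ((antidiff ^^ m) (indicator S) k)) \<notin> lac_stat \<theta> \<beta> m"
      using crisp_antidiff_notin_lac_stat[OF assms(1,4), of S] n_bounds(1) card_zeros
      by (simp add: card_ones)
  qed
qed

theorem theorem2p5:
  fixes \<beta> \<gamma> :: real and m :: nat and \<theta> :: "nat \<Rightarrow> nat"
  assumes "0 < \<beta>" and "\<beta> < \<gamma>" and "\<gamma> \<le> 1" and "lacunary \<theta>"
  shows "lac_stat \<theta> \<beta> m \<subseteq> lac_stat \<theta> \<gamma> m \<and> lac_stat \<theta> \<beta> m \<noteq> lac_stat \<theta> \<gamma> m"
proof
  show "lac_stat \<theta> \<beta> m \<subseteq> lac_stat \<theta> \<gamma> m"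
    using lac_stat_mono assms(2,4) by simp
  have "0 < \<gamma>" "\<beta> < 1"
    using assms(1-3) by linarith+
  then obtain X where "X \<in> lac_stat \<theta> \<gamma> m" "X \<notin> lac_stat \<theta> \<beta> m"
    by (rule lac_stat_strict[OF assms(4) _ assms(2)])
  then show "lac_stat \<theta> \<beta> m \<noteq> lac_stat \<theta> \<gamma> m" by blast
qed

end
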